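(* If $\xi\in L_G^{*1}(\Omega)$, then $|\xi|\in L_G^{*1}(\Omega)$.
   Context: $\Omega=C_0^d(\mathbb{R}^+)$ is the space of continuous paths $\omega:[0,\infty)\to\mathbb{R}^d$ with $\omega_0=0$, $B$ the canonical process, $\hat{\mathbb{E}}$ the $G$-expectation ($G$ a monotone sublinear function on $d\times d$ symmetric matrices), $L^1_G(\Omega)$ the completion of bounded Lipschitz cylinder functions $\varphi(B_{t_1},\dots,B_{t_n})$ under $\hat{\mathbb{E}}[|\cdot|]$. $\mathcal{P}$ is a weakly compact set of probability measures representing $\hat{\mathbb{E}}$, $\hat{\mathbb{E}}[X]=\sup_{P\in\mathcal{P}}E_P[X]$ for Borel $X$, $c(A)=\sup_{P\in\mathcal{P}}P(A)$, q.s. = outside a capacity-zero set. $\mathbb{L}^1(\Omega)$ = Borel $[-\infty,\infty]$-valued $X$ with $\hat{\mathbb{E}}[|X|]<\infty$; $L_G^{1^*}(\Omega)=\{X\in\mathbb{L}^1(\Omega):\exists X_n\in L^1_G(\Omega),X_n\downarrow X\text{ q.s.}\}$; $L_G^{*1}(\Omega)=\{X-Y:X,Y\in L_G^{1^*}(\Omega)\}$. *)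

theory Defs
  imports "HOL-Probability.Probability"
begin

text \<open>Canonical path space: continuous paths on [0,\<infinity>) in R^d starting at 0
  (extended by 0 on negative times so that a path is determined by its values on [0,\<infinity>)).\<close>
definition Omega :: "(real \<Rightarrow> real^'d) set" where
  "Omega = {\<omega>. continuous_on {0..} \<omega> \<and> \<omega> 0 = 0 \<and> (\<forall>t<0. \<omega> t = 0)}"

definition OmegaM :: "(real \<Rightarrow> real^'d) measure" where
  "OmegaM = sigma Omega {{\<omega>\<in>Omega. \<omega> t \<in> A} | t A. 0 \<le> t \<and> open A}"

text \<open>Standing assumption on the family of probability measures representing the
  sublinear expectation.\<close>
definition admissible_family :: "(real \<Rightarrow> real^'d) measure set \<Rightarrow> bool" where
  "admissible_family \<P> \<longleftrightarrow> \<P> \<noteq> {} \<and>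
     (\<forall>P\<in>\<P>. prob_space P \<and> sets P = sets (OmegaM :: (real \<Rightarrow> real^'d) measure))"

definition EG_abs :: "(real \<Rightarrow> real^'d) measure set \<Rightarrow> ((real \<Rightarrow> real^'d) \<Rightarrow> ereal) \<Rightarrow> ennreal" where
  "EG_abs \<P> X = (SUP P\<in>\<P>. \<integral>\<^sup>+ \<omega>. e2ennreal \<bar>X \<omega>\<bar> \<partial>P)"

definition qs :: "(real \<Rightarrow> real^'d) measure set \<Rightarrow> ((real \<Rightarrow> real^'d) \<Rightarrow> bool) \<Rightarrow> bool" where
  "qs \<P> Q \<longleftrightarrow> (\<exists>N \<in> sets (OmegaM :: (real \<Rightarrow> real^'d) measure).
      (SUP P\<in>\<P>. emeasure P N) = 0 \<and> (\<forall>\<omega>\<in>Omega - N. Q \<omega>))"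

definition lip_cyl :: "((real \<Rightarrow> real^'d) \<Rightarrow> real) set" where
  "lip_cyl = {X. \<exists>(n::nat) (t::nat \<Rightarrow> real) (\<phi>::(nat \<Rightarrow> real^'d) \<Rightarrow> real) L C.
      (\<forall>i<n. 0 \<le> t i) \<and> (\<forall>x. \<bar>\<phi> x\<bar> \<le> C) \<and>
      (\<forall>x y. \<bar>\<phi> x - \<phi> y\<bar> \<le> L * (\<Sum>i<n. norm (x i - y i))) \<and>
      (\<forall>\<omega>. X \<omega> = \<phi> (\<lambda>i. \<omega> (t i)))}"

text \<open>\<open>L^1_G\<close>: completion of the bounded Lipschitz cylinder functions under \<open>E[|.|]\<close>,
  realised as (real-valued) Borel functions approximable by cylinder functions.\<close>
definition LG1 :: "(real \<Rightarrow> real^'d) measure set \<Rightarrow> ((real \<Rightarrow> real^'d) \<Rightarrow> ereal) set" where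
  "LG1 \<P> = {X. X \<in> borel_measurable (OmegaM :: (real \<Rightarrow> real^'d) measure) \<and>
      (\<forall>\<omega>\<in>Omega. \<bar>X \<omega>\<bar> \<noteq> \<infinity>) \<and>
      (\<exists>\<phi>::nat \<Rightarrow> (real \<Rightarrow> real^'d) \<Rightarrow> real. (\<forall>n. \<phi> n \<in> lip_cyl) \<and>
         (\<lambda>n. EG_abs \<P> (\<lambda>\<omega>. X \<omega> - ereal (\<phi> n \<omega>))) \<longlonglongrightarrow> 0)}"

definition L1 :: "(real \<Rightarrow> real^'d) measure set \<Rightarrow> ((real \<Rightarrow> real^'d) \<Rightarrow> ereal) set" where
  "L1 \<P> = {X. X \<in> borel_measurable (OmegaM :: (real \<Rightarrow> real^'d) measure) \<and> EG_abs \<P> X < \<infinity>}"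

definition LG1_star :: "(real \<Rightarrow> real^'d) measure set \<Rightarrow> ((real \<Rightarrow> real^'d) \<Rightarrow> ereal) set" where
  "LG1_star \<P> = {X. X \<in> L1 \<P> \<and> (\<exists>Xn. (\<forall>n. Xn n \<in> LG1 \<P>) \<and>
      qs \<P> (\<lambda>\<omega>. (\<forall>n. Xn (Suc n) \<omega> \<le> Xn n \<omega>) \<and> (\<lambda>n. Xn n \<omega>) \<longlonglongrightarrow> X \<omega>))}"

definition LG_star1 :: "(real \<Rightarrow> real^'d) measure set \<Rightarrow> ((real \<Rightarrow> real^'d) \<Rightarrow> ereal) set" where
  "LG_star1 \<P> = {\<xi>. \<exists>X\<in>LG1_star \<P>. \<exists>Y\<in>LG1_star \<P>. \<forall>\<omega>\<in>Omega. \<xi> \<omega> = X \<omega> - Y \<omega>}"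

end

theory Submission
  imports Defs
begin

text \<open>Since \<open>|X - Y| = max X Y - min X Y\<close>, it suffices that \<open>L_G^{1*}\<close> is closed under \<open>max\<close> and
  \<open>min\<close>. Both operations are monotone, continuous and 1-Lipschitz in each argument: monotonicity
  and continuity carry decreasing quasi-sure limits over, the Lipschitz bound transports cylinder
  approximations in \<open>L^1_G\<close>, and \<open>|max X Y| \<le> |X| + |Y|\<close> keeps the upper expectation finite.\<close>

lemma space_OmegaM: "space (OmegaM :: (real \<Rightarrow> real^'d) measure) = Omega"
  unfolding OmegaM_def by (rule space_measure_of) auto

lemma admissible_family_sets:
  assumes "admissible_family \<P>" and "P \<in> \<P>"
  shows "sets P = sets (OmegaM :: (real \<Rightarrow> real^'d) measure)" and "space P = Omega"
proof -
  show sets: "sets P = sets (OmegaM :: (real \<Rightarrow> real^'d) measure)"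
    using assms by (auto simp: admissible_family_def)
  show "space P = Omega"
    using sets_eq_imp_space_eq[OF sets] by (simp add: space_OmegaM)
qed

lemma coordinate_measurable_OmegaM:
  "(\<lambda>\<omega>::real \<Rightarrow> real^'d. \<omega> s) \<in> borel_measurable OmegaM"
proof (rule borel_measurableI)
  fix S :: "(real^'d) set" assume S: "open S"
  show "(\<lambda>\<omega>. \<omega> s) -` S \<inter> space OmegaM \<in> sets OmegaM"
  proof (cases "0 \<le> s")
    case True
    have "(\<lambda>\<omega>::real \<Rightarrow> real^'d. \<omega> s) -` S \<inter> space OmegaM = {\<omega>\<in>Omega. \<omega> s \<in> S}"
      by (auto simp: space_OmegaM)
    also have "\<dots> \<in> sets OmegaM" unfolding OmegaM_def
      by (subst sets_measure_of) (use True S in \<open>auto intro!: sigma_sets.Basic\<close>)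
    finally show ?thesis .
  next
    case False
    have "(\<lambda>\<omega>::real \<Rightarrow> real^'d. \<omega> s) -` S \<inter> space OmegaM = (if 0 \<in> S then space OmegaM else {})"
      using False by (auto simp: space_OmegaM Omega_def)
    then show ?thesis by simp
  qed
qed

lemma continuous_on_Lipschitz_sum_norm:
  fixes \<phi> :: "(nat \<Rightarrow> 'a::real_normed_vector) \<Rightarrow> real"
  assumes L: "\<And>x y. \<bar>\<phi> x - \<phi> y\<bar> \<le> L * (\<Sum>i<n. norm (x i - y i))"
  shows "continuous_on UNIV \<phi>"
proof -
  have "(\<phi> \<longlongrightarrow> \<phi> y) (at y)" for y
  proof -
    have "((\<lambda>x. x i) \<longlongrightarrow> y i) (at y)" for i
      using continuous_on_product_coordinates[of i, where 'b='a] by (simp add: continuous_on_def)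
    then have bound_lim: "((\<lambda>x. L * (\<Sum>i<n. norm (x i - y i))) \<longlongrightarrow> L * (\<Sum>i<n. norm (y i - y i))) (at y)"
      by (intro tendsto_intros)
    have "((\<lambda>x. \<phi> x - \<phi> y) \<longlongrightarrow> 0) (at y)"
      by (rule Lim_null_comparison[where g="\<lambda>x. L * (\<Sum>i<n. norm (x i - y i))"]) (use L bound_lim in auto)
    then show ?thesis by (simp add: LIM_zero_iff)
  qed
  then show ?thesis by (simp add: continuous_on_def)
qed

lemma lip_cyl_measurable:
  assumes "X \<in> (lip_cyl :: ((real \<Rightarrow> real^'d) \<Rightarrow> real) set)"
  shows "X \<in> borel_measurable OmegaM"
proof -
  obtain n :: nat and t :: "nat \<Rightarrow> real" and \<phi> :: "(nat \<Rightarrow> real^'d) \<Rightarrow> real" and L :: real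
    where lip: "\<forall>x y. \<bar>\<phi> x - \<phi> y\<bar> \<le> L * (\<Sum>i<n. norm (x i - y i))"
      and X_eq: "\<forall>\<omega>. X \<omega> = \<phi> (\<lambda>i. \<omega> (t i))"
    using assms unfolding lip_cyl_def by auto
  have "(\<lambda>\<omega>::real \<Rightarrow> real^'d. \<lambda>i. \<omega> (t i)) \<in> OmegaM \<rightarrow>\<^sub>M (Pi\<^sub>M UNIV (\<lambda>_. borel))"
    by (rule measurable_PiM_single'[where f="\<lambda>i \<omega>. \<omega> (t i)"])
      (auto intro: coordinate_measurable_OmegaM)
  then have "(\<lambda>\<omega>::real \<Rightarrow> real^'d. \<lambda>i. \<omega> (t i)) \<in> OmegaM \<rightarrow>\<^sub>M (borel :: (nat \<Rightarrow> real^'d) measure)"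
    using measurable_cong_sets[OF refl sets_PiM_equal_borel] by blast
  moreover have "\<phi> \<in> borel_measurable borel"
    by (intro borel_measurable_continuous_onI continuous_on_Lipschitz_sum_norm) (use lip in blast)
  moreover have "X = \<phi> \<circ> (\<lambda>\<omega>. \<lambda>i. \<omega> (t i))"
    using X_eq by (auto simp: fun_eq_iff)
  ultimately show ?thesis
    by (metis measurable_comp)
qed

lemma sum_lessThan_shift_le:
  fixes f :: "nat \<Rightarrow> real"
  assumes "\<And>i. 0 \<le> f i"
  shows "(\<Sum>i<m. f (i + n)) \<le> (\<Sum>i<n + m. f i)"
proof -
  have "(\<Sum>i<m. f (i + n)) = (\<Sum>i\<in>{n..<n + m}. f i)"
    by (simp add: atLeast0LessThan[symmetric] sum.shift_bounds_nat_ivl[symmetric] add.commute)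
  also have "\<dots> \<le> (\<Sum>i<n + m. f i)"
    by (rule sum_mono2) (use assms in auto)
  finally show ?thesis .
qed

text \<open>The combined cylinder function reads the time grid of \<open>X\<close> followed by that of \<open>Y\<close>.\<close>

lemma lip_cyl_combine:
  fixes g :: "real \<Rightarrow> real \<Rightarrow> real"
  assumes g_bound: "\<And>a b. \<bar>g a b\<bar> \<le> \<bar>a\<bar> + \<bar>b\<bar>"
    and g_lip: "\<And>a b c d. \<bar>g a b - g c d\<bar> \<le> \<bar>a - c\<bar> + \<bar>b - d\<bar>"
    and X: "X \<in> (lip_cyl :: ((real \<Rightarrow> real^'d) \<Rightarrow> real) set)" and Y: "Y \<in> lip_cyl"
  shows "(\<lambda>\<omega>. g (X \<omega>) (Y \<omega>)) \<in> lip_cyl"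
proof -
  obtain n :: nat and t :: "nat \<Rightarrow> real" and \<phi> :: "(nat \<Rightarrow> real^'d) \<Rightarrow> real" and L C :: real
    where t: "\<forall>i<n. 0 \<le> t i" and \<phi>_bound: "\<forall>x. \<bar>\<phi> x\<bar> \<le> C"
      and \<phi>_lip: "\<forall>x y. \<bar>\<phi> x - \<phi> y\<bar> \<le> L * (\<Sum>i<n. norm (x i - y i))"
      and X_eq: "\<forall>\<omega>. X \<omega> = \<phi> (\<lambda>i. \<omega> (t i))"
    using X unfolding lip_cyl_def by auto
  obtain m :: nat and s :: "nat \<Rightarrow> real" and \<psi> :: "(nat \<Rightarrow> real^'d) \<Rightarrow> real" and K D :: real
    where s: "\<forall>i<m. 0 \<le> s i" and \<psi>_bound: "\<forall>x. \<bar>\<psi> x\<bar> \<le> D"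
      and \<psi>_lip: "\<forall>x y. \<bar>\<psi> x - \<psi> y\<bar> \<le> K * (\<Sum>i<m. norm (x i - y i))"
      and Y_eq: "\<forall>\<omega>. Y \<omega> = \<psi> (\<lambda>i. \<omega> (s i))"
    using Y unfolding lip_cyl_def by auto
  define u where "u i = (if i < n then t i else s (i - n))" for i
  define \<Phi> where "\<Phi> x = g (\<phi> x) (\<psi> (\<lambda>i. x (i + n)))" for x :: "nat \<Rightarrow> real^'d"
  have u: "\<forall>i<n + m. 0 \<le> u i"
    using t s by (auto simp: u_def)
  have bound: "\<forall>x. \<bar>\<Phi> x\<bar> \<le> C + D"
    using g_bound \<phi>_bound \<psi>_bound unfolding \<Phi>_def by (meson add_mono order_trans)
  have lip: "\<forall>x y. \<bar>\<Phi> x - \<Phi> y\<bar> \<le> (max L 0 + max K 0) * (\<Sum>i<n + m. norm (x i - y i))"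
  proof (intro allI)
    fix x y :: "nat \<Rightarrow> real^'d"
    let ?S = "\<Sum>i<n + m. norm (x i - y i)"
    have "\<bar>\<phi> x - \<phi> y\<bar> \<le> L * (\<Sum>i<n. norm (x i - y i))"
      using \<phi>_lip by blast
    also have "\<dots> \<le> max L 0 * (\<Sum>i<n. norm (x i - y i))"
      by (intro mult_right_mono) (auto simp: sum_nonneg)
    also have "\<dots> \<le> max L 0 * ?S"
      by (intro mult_left_mono sum_mono2) auto
    finally have \<phi>_part: "\<bar>\<phi> x - \<phi> y\<bar> \<le> max L 0 * ?S" .
    have "\<bar>\<psi> (\<lambda>i. x (i + n)) - \<psi> (\<lambda>i. y (i + n))\<bar> \<le> K * (\<Sum>i<m. norm (x (i + n) - y (i + n)))"
      using \<psi>_lip by blast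
    also have "\<dots> \<le> max K 0 * (\<Sum>i<m. norm (x (i + n) - y (i + n)))"
      by (intro mult_right_mono) (auto simp: sum_nonneg)
    also have "\<dots> \<le> max K 0 * ?S"
      by (intro mult_left_mono sum_lessThan_shift_le) auto
    finally have \<psi>_part: "\<bar>\<psi> (\<lambda>i. x (i + n)) - \<psi> (\<lambda>i. y (i + n))\<bar> \<le> max K 0 * ?S" .
    show "\<bar>\<Phi> x - \<Phi> y\<bar> \<le> (max L 0 + max K 0) * ?S"
      using g_lip[of "\<phi> x" "\<psi> (\<lambda>i. x (i + n))" "\<phi> y" "\<psi> (\<lambda>i. y (i + n))"] \<phi>_part \<psi>_part
      unfolding \<Phi>_def by (simp add: distrib_right)
  qed
  have rep: "\<forall>\<omega>. g (X \<omega>) (Y \<omega>) = \<Phi> (\<lambda>i. \<omega> (u i))"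
  proof
    fix \<omega> :: "real \<Rightarrow> real^'d"
    have "\<bar>\<phi> (\<lambda>i. \<omega> (t i)) - \<phi> (\<lambda>i. \<omega> (u i))\<bar> \<le> L * (\<Sum>i<n. norm (\<omega> (t i) - \<omega> (u i)))"
      using \<phi>_lip by blast
    also have "(\<Sum>i<n. norm (\<omega> (t i) - \<omega> (u i))) = 0"
      by (simp add: u_def)
    finally have "\<phi> (\<lambda>i. \<omega> (t i)) = \<phi> (\<lambda>i. \<omega> (u i))" by simp
    moreover have "(\<lambda>i. \<omega> (u (i + n))) = (\<lambda>i. \<omega> (s i))"
      by (simp add: u_def)
    ultimately show "g (X \<omega>) (Y \<omega>) = \<Phi> (\<lambda>i. \<omega> (u i))"
      unfolding \<Phi>_def using X_eq Y_eq by simp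
  qed
  show ?thesis
    unfolding lip_cyl_def using u bound lip rep by blast
qed

lemma e2ennreal_add:
  assumes "0 \<le> a" and "0 \<le> b"
  shows "e2ennreal (a + b) = e2ennreal a + e2ennreal b"
  by (metis assms enn2ereal_e2ennreal e2ennreal_enn2ereal plus_ennreal.rep_eq)

lemma EG_abs_le_add:
  fixes X Y Z :: "(real \<Rightarrow> real^'d) \<Rightarrow> ereal"
  assumes adm: "admissible_family \<P>"
    and X: "X \<in> borel_measurable OmegaM" and Y: "Y \<in> borel_measurable OmegaM"
    and le: "\<And>\<omega>. \<omega> \<in> Omega \<Longrightarrow> \<bar>Z \<omega>\<bar> \<le> \<bar>X \<omega>\<bar> + \<bar>Y \<omega>\<bar>"
  shows "EG_abs \<P> Z \<le> EG_abs \<P> X + EG_abs \<P> Y"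
  unfolding EG_abs_def
proof (rule SUP_least)
  fix P assume P: "P \<in> \<P>"
  note sets_P = admissible_family_sets[OF adm P]
  have "(\<lambda>\<omega>. e2ennreal \<bar>X \<omega>\<bar>) \<in> borel_measurable P" "(\<lambda>\<omega>. e2ennreal \<bar>Y \<omega>\<bar>) \<in> borel_measurable P"
    using X Y by (simp_all add: measurable_cong_sets[OF sets_P(1) refl])
  note [measurable] = this
  have "(\<integral>\<^sup>+ \<omega>. e2ennreal \<bar>Z \<omega>\<bar> \<partial>P) \<le> (\<integral>\<^sup>+ \<omega>. e2ennreal \<bar>X \<omega>\<bar> + e2ennreal \<bar>Y \<omega>\<bar> \<partial>P)"
  proof (rule nn_integral_mono)
    fix \<omega> assume "\<omega> \<in> space P"
    then have "e2ennreal \<bar>Z \<omega>\<bar> \<le> e2ennreal (\<bar>X \<omega>\<bar> + \<bar>Y \<omega>\<bar>)"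
      using le sets_P(2) by (auto intro: e2ennreal_mono)
    then show "e2ennreal \<bar>Z \<omega>\<bar> \<le> e2ennreal \<bar>X \<omega>\<bar> + e2ennreal \<bar>Y \<omega>\<bar>"
      by (simp add: e2ennreal_add)
  qed
  also have "\<dots> = (\<integral>\<^sup>+ \<omega>. e2ennreal \<bar>X \<omega>\<bar> \<partial>P) + (\<integral>\<^sup>+ \<omega>. e2ennreal \<bar>Y \<omega>\<bar> \<partial>P)"
    by (rule nn_integral_add) measurable
  also have "\<dots> \<le> (SUP P\<in>\<P>. \<integral>\<^sup>+ \<omega>. e2ennreal \<bar>X \<omega>\<bar> \<partial>P) + (SUP P\<in>\<P>. \<integral>\<^sup>+ \<omega>. e2ennreal \<bar>Y \<omega>\<bar> \<partial>P)"
    by (intro add_mono SUP_upper P)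
  finally show "(\<integral>\<^sup>+ \<omega>. e2ennreal \<bar>Z \<omega>\<bar> \<partial>P) \<le> \<dots>" .
qed

lemma qs_mono:
  assumes "qs \<P> A" and "\<And>\<omega>. A \<omega> \<Longrightarrow> B \<omega>"
  shows "qs \<P> B"
  using assms unfolding qs_def by blast

lemma qs_conj:
  fixes \<P> :: "(real \<Rightarrow> real^'d) measure set"
  assumes adm: "admissible_family \<P>" and "qs \<P> A" and "qs \<P> B"
  shows "qs \<P> (\<lambda>\<omega>. A \<omega> \<and> B \<omega>)"
proof -
  obtain N1 where N1: "N1 \<in> sets (OmegaM :: (real \<Rightarrow> real^'d) measure)"
      "(SUP P\<in>\<P>. emeasure P N1) = 0" "\<forall>\<omega>\<in>Omega - N1. A \<omega>"
    using assms(2) unfolding qs_def by blast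
  obtain N2 where N2: "N2 \<in> sets (OmegaM :: (real \<Rightarrow> real^'d) measure)"
      "(SUP P\<in>\<P>. emeasure P N2) = 0" "\<forall>\<omega>\<in>Omega - N2. B \<omega>"
    using assms(3) unfolding qs_def by blast
  have "emeasure P (N1 \<union> N2) = 0" if P: "P \<in> \<P>" for P
  proof -
    have "emeasure P N1 = 0" "emeasure P N2 = 0"
      using N1(2) N2(2) P by (metis SUP_upper le_zero_eq)+
    moreover have "emeasure P (N1 \<union> N2) \<le> emeasure P N1 + emeasure P N2"
      by (rule emeasure_subadditive) (use N1 N2 admissible_family_sets[OF adm P] in auto)
    ultimately show ?thesis by simp
  qed
  then have "(SUP P\<in>\<P>. emeasure P (N1 \<union> N2)) = 0"
    by (intro antisym SUP_least) auto
  then show ?thesis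
    unfolding qs_def using N1 N2 by (intro bexI[of _ "N1 \<union> N2"]) auto
qed

lemma LG1_combine:
  fixes \<P> :: "(real \<Rightarrow> real^'d) measure set" and g :: "real \<Rightarrow> real \<Rightarrow> real"
    and G :: "ereal \<Rightarrow> ereal \<Rightarrow> ereal" and X Y :: "(real \<Rightarrow> real^'d) \<Rightarrow> ereal"
  assumes adm: "admissible_family \<P>"
    and g_bound: "\<And>a b. \<bar>g a b\<bar> \<le> \<bar>a\<bar> + \<bar>b\<bar>"
    and g_lip: "\<And>a b c d. \<bar>g a b - g c d\<bar> \<le> \<bar>a - c\<bar> + \<bar>b - d\<bar>"
    and G_ereal: "\<And>a b. G (ereal a) (ereal b) = ereal (g a b)"
    and G_measurable: "(\<lambda>\<omega>. G (X \<omega>) (Y \<omega>)) \<in> borel_measurable OmegaM"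
    and X: "X \<in> LG1 \<P>" and Y: "Y \<in> LG1 \<P>"
  shows "(\<lambda>\<omega>. G (X \<omega>) (Y \<omega>)) \<in> LG1 \<P>"
proof -
  obtain \<phi> :: "nat \<Rightarrow> (real \<Rightarrow> real^'d) \<Rightarrow> real"
    where X_meas [measurable]: "X \<in> borel_measurable OmegaM" and X_fin: "\<forall>\<omega>\<in>Omega. \<bar>X \<omega>\<bar> \<noteq> \<infinity>"
      and \<phi>: "\<forall>k. \<phi> k \<in> lip_cyl" and \<phi>_lim: "(\<lambda>k. EG_abs \<P> (\<lambda>\<omega>. X \<omega> - ereal (\<phi> k \<omega>))) \<longlonglongrightarrow> 0"
    using X unfolding LG1_def by auto
  obtain \<psi> :: "nat \<Rightarrow> (real \<Rightarrow> real^'d) \<Rightarrow> real"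
    where Y_meas [measurable]: "Y \<in> borel_measurable OmegaM" and Y_fin: "\<forall>\<omega>\<in>Omega. \<bar>Y \<omega>\<bar> \<noteq> \<infinity>"
      and \<psi>: "\<forall>k. \<psi> k \<in> lip_cyl" and \<psi>_lim: "(\<lambda>k. EG_abs \<P> (\<lambda>\<omega>. Y \<omega> - ereal (\<psi> k \<omega>))) \<longlonglongrightarrow> 0"
    using Y unfolding LG1_def by auto
  define \<Phi> where "\<Phi> k \<omega> = g (\<phi> k \<omega>) (\<psi> k \<omega>)" for k \<omega>
  have \<Phi>: "\<forall>k. \<Phi> k \<in> lip_cyl"
    unfolding \<Phi>_def using lip_cyl_combine[OF g_bound g_lip] \<phi> \<psi> by blast
  have finite_on_Omega: "\<exists>x y. X \<omega> = ereal x \<and> Y \<omega> = ereal y" if "\<omega> \<in> Omega" for \<omega>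
    using X_fin Y_fin that by (cases "X \<omega>"; cases "Y \<omega>") auto
  have G_fin: "\<forall>\<omega>\<in>Omega. \<bar>G (X \<omega>) (Y \<omega>)\<bar> \<noteq> \<infinity>"
  proof
    fix \<omega> :: "real \<Rightarrow> real^'d" assume "\<omega> \<in> Omega"
    then obtain x y where "X \<omega> = ereal x" "Y \<omega> = ereal y"
      using finite_on_Omega by blast
    then show "\<bar>G (X \<omega>) (Y \<omega>)\<bar> \<noteq> \<infinity>"
      by (simp add: G_ereal)
  qed
  have error_bound: "EG_abs \<P> (\<lambda>\<omega>. G (X \<omega>) (Y \<omega>) - ereal (\<Phi> k \<omega>)) \<le>
      EG_abs \<P> (\<lambda>\<omega>. X \<omega> - ereal (\<phi> k \<omega>)) + EG_abs \<P> (\<lambda>\<omega>. Y \<omega> - ereal (\<psi> k \<omega>))" for k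
  proof (rule EG_abs_le_add[OF adm])
    have [measurable]: "\<phi> k \<in> borel_measurable OmegaM" "\<psi> k \<in> borel_measurable OmegaM"
      using \<phi> \<psi> lip_cyl_measurable by blast+
    show "(\<lambda>\<omega>. X \<omega> - ereal (\<phi> k \<omega>)) \<in> borel_measurable OmegaM"
      and "(\<lambda>\<omega>. Y \<omega> - ereal (\<psi> k \<omega>)) \<in> borel_measurable OmegaM"
      by measurable
    fix \<omega> :: "real \<Rightarrow> real^'d" assume "\<omega> \<in> Omega"
    then obtain x y where "X \<omega> = ereal x" "Y \<omega> = ereal y"
      using finite_on_Omega by blast
    then show "\<bar>G (X \<omega>) (Y \<omega>) - ereal (\<Phi> k \<omega>)\<bar> \<le> \<bar>X \<omega> - ereal (\<phi> k \<omega>)\<bar> + \<bar>Y \<omega> - ereal (\<psi> k \<omega>)\<bar>"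
      using g_lip by (simp add: G_ereal \<Phi>_def)
  qed
  have errors_lim: "(\<lambda>k. EG_abs \<P> (\<lambda>\<omega>. X \<omega> - ereal (\<phi> k \<omega>)) + EG_abs \<P> (\<lambda>\<omega>. Y \<omega> - ereal (\<psi> k \<omega>))) \<longlonglongrightarrow> 0"
    using tendsto_add[OF \<phi>_lim \<psi>_lim] by simp
  have "(\<lambda>k. EG_abs \<P> (\<lambda>\<omega>. G (X \<omega>) (Y \<omega>) - ereal (\<Phi> k \<omega>))) \<longlonglongrightarrow> 0"
    by (rule tendsto_sandwich[OF _ _ tendsto_const errors_lim]) (use error_bound in auto)
  then show ?thesis
    unfolding LG1_def using G_measurable G_fin \<Phi> by blast
qed

lemma LG1_star_combine:
  fixes \<P> :: "(real \<Rightarrow> real^'d) measure set" and g :: "real \<Rightarrow> real \<Rightarrow> real"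
    and G :: "ereal \<Rightarrow> ereal \<Rightarrow> ereal" and X Y :: "(real \<Rightarrow> real^'d) \<Rightarrow> ereal"
  assumes adm: "admissible_family \<P>"
    and g_bound: "\<And>a b. \<bar>g a b\<bar> \<le> \<bar>a\<bar> + \<bar>b\<bar>"
    and g_lip: "\<And>a b c d. \<bar>g a b - g c d\<bar> \<le> \<bar>a - c\<bar> + \<bar>b - d\<bar>"
    and G_ereal: "\<And>a b. G (ereal a) (ereal b) = ereal (g a b)"
    and G_bound: "\<And>a b. \<bar>G a b\<bar> \<le> \<bar>a\<bar> + \<bar>b\<bar>"
    and G_mono: "\<And>a b c d. a \<le> c \<Longrightarrow> b \<le> d \<Longrightarrow> G a b \<le> G c d"
    and G_tendsto: "\<And>f h a b. f \<longlonglongrightarrow> a \<Longrightarrow> h \<longlonglongrightarrow> b \<Longrightarrow> (\<lambda>n. G (f n) (h n)) \<longlonglongrightarrow> G a b"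
    and G_measurable: "\<And>U V :: (real \<Rightarrow> real^'d) \<Rightarrow> ereal.
        U \<in> borel_measurable OmegaM \<Longrightarrow> V \<in> borel_measurable OmegaM \<Longrightarrow>
        (\<lambda>\<omega>. G (U \<omega>) (V \<omega>)) \<in> borel_measurable OmegaM"
    and X: "X \<in> LG1_star \<P>" and Y: "Y \<in> LG1_star \<P>"
  shows "(\<lambda>\<omega>. G (X \<omega>) (Y \<omega>)) \<in> LG1_star \<P>"
proof -
  obtain Xn where X_L1: "X \<in> L1 \<P>" and Xn: "\<forall>n. Xn n \<in> LG1 \<P>"
      and Xn_lim: "qs \<P> (\<lambda>\<omega>. (\<forall>n. Xn (Suc n) \<omega> \<le> Xn n \<omega>) \<and> (\<lambda>n. Xn n \<omega>) \<longlonglongrightarrow> X \<omega>)"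
    using X unfolding LG1_star_def by auto
  obtain Yn where Y_L1: "Y \<in> L1 \<P>" and Yn: "\<forall>n. Yn n \<in> LG1 \<P>"
      and Yn_lim: "qs \<P> (\<lambda>\<omega>. (\<forall>n. Yn (Suc n) \<omega> \<le> Yn n \<omega>) \<and> (\<lambda>n. Yn n \<omega>) \<longlonglongrightarrow> Y \<omega>)"
    using Y unfolding LG1_star_def by auto
  have X_meas: "X \<in> borel_measurable OmegaM" and Y_meas: "Y \<in> borel_measurable OmegaM"
    using X_L1 Y_L1 unfolding L1_def by auto
  have "EG_abs \<P> (\<lambda>\<omega>. G (X \<omega>) (Y \<omega>)) \<le> EG_abs \<P> X + EG_abs \<P> Y"
    by (rule EG_abs_le_add[OF adm X_meas Y_meas G_bound])
  also have "\<dots> < \<infinity>"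
    using X_L1 Y_L1 unfolding L1_def by (simp add: ennreal_add_less_top)
  finally have G_L1: "(\<lambda>\<omega>. G (X \<omega>) (Y \<omega>)) \<in> L1 \<P>"
    unfolding L1_def using G_measurable[OF X_meas Y_meas] by blast
  have Gn: "(\<lambda>\<omega>. G (Xn n \<omega>) (Yn n \<omega>)) \<in> LG1 \<P>" for n
    using Xn Yn by (intro LG1_combine[OF adm g_bound g_lip G_ereal] G_measurable) (auto simp: LG1_def)
  have "qs \<P> (\<lambda>\<omega>. (\<forall>n. G (Xn (Suc n) \<omega>) (Yn (Suc n) \<omega>) \<le> G (Xn n \<omega>) (Yn n \<omega>)) \<and>
      (\<lambda>n. G (Xn n \<omega>) (Yn n \<omega>)) \<longlonglongrightarrow> G (X \<omega>) (Y \<omega>))"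
    by (rule qs_mono[OF qs_conj[OF adm Xn_lim Yn_lim]]) (auto intro: G_mono G_tendsto)
  then show ?thesis
    unfolding LG1_star_def mem_Collect_eq
    by (intro conjI G_L1 exI[where x = "\<lambda>n \<omega>. G (Xn n \<omega>) (Yn n \<omega>)"]) (use Gn in simp_all)
qed

lemma LG1_star_max:
  assumes "admissible_family \<P>" and "X \<in> LG1_star \<P>" and "Y \<in> LG1_star \<P>"
  shows "(\<lambda>\<omega>. max (X \<omega>) (Y \<omega>)) \<in> LG1_star \<P>"
proof (rule LG1_star_combine[where g = max, OF assms(1) _ _ _ _ _ tendsto_max _ assms(2,3)])
  show "\<bar>max a b\<bar> \<le> \<bar>a\<bar> + \<bar>b\<bar>" "\<bar>max a b - max c d\<bar> \<le> \<bar>a - c\<bar> + \<bar>b - d\<bar>" for a b c d :: real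
    by (auto simp: max_def)
  show "\<bar>max a b\<bar> \<le> \<bar>a\<bar> + \<bar>b\<bar>" for a b :: ereal
    by (cases a; cases b) (auto simp: max_def)
qed (auto simp: max_def intro: order_trans)

lemma LG1_star_min:
  assumes "admissible_family \<P>" and "X \<in> LG1_star \<P>" and "Y \<in> LG1_star \<P>"
  shows "(\<lambda>\<omega>. min (X \<omega>) (Y \<omega>)) \<in> LG1_star \<P>"
proof (rule LG1_star_combine[where g = min, OF assms(1) _ _ _ _ _ tendsto_min _ assms(2,3)])
  show "\<bar>min a b\<bar> \<le> \<bar>a\<bar> + \<bar>b\<bar>" "\<bar>min a b - min c d\<bar> \<le> \<bar>a - c\<bar> + \<bar>b - d\<bar>" for a b c d :: real
    by (auto simp: min_def)
  show "\<bar>min a b\<bar> \<le> \<bar>a\<bar> + \<bar>b\<bar>" for a b :: ereal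
    by (cases a; cases b) (auto simp: min_def)
qed (auto simp: min_def intro: order_trans)

lemma ereal_abs_diff_eq_max_minus_min: "\<bar>a - b\<bar> = max a b - min a b" for a b :: ereal
  by (cases a; cases b) (auto simp: max_def min_def)

theorem proposition3p17:
  fixes \<P> :: "(real \<Rightarrow> real^'d) measure set"
    and \<xi> :: "(real \<Rightarrow> real^'d) \<Rightarrow> ereal"
  assumes "admissible_family \<P>"
    and "\<xi> \<in> LG_star1 \<P>"
  shows "(\<lambda>\<omega>. \<bar>\<xi> \<omega>\<bar>) \<in> LG_star1 \<P>"
proof -
  obtain X Y where X: "X \<in> LG1_star \<P>" and Y: "Y \<in> LG1_star \<P>"
    and \<xi>_eq: "\<forall>\<omega>\<in>Omega. \<xi> \<omega> = X \<omega> - Y \<omega>"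
    using assms(2) unfolding LG_star1_def by blast
  have "\<forall>\<omega>\<in>Omega. \<bar>\<xi> \<omega>\<bar> = max (X \<omega>) (Y \<omega>) - min (X \<omega>) (Y \<omega>)"
    using \<xi>_eq ereal_abs_diff_eq_max_minus_min by simp
  then show ?thesis
    unfolding LG_star1_def mem_Collect_eq
    by (intro bexI[OF _ LG1_star_max[OF assms(1) X Y]] bexI[OF _ LG1_star_min[OF assms(1) X Y]])
qed

end
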